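(* Let $q\ge1$ be an integer. Let $T_{q+2}'=\sum_{i,j,k\in\{0,\dots,q+1\},\ i+j+k\equiv q+1 \pmod{q+2}} x_iy_jz_k$ (the structural tensor of $\mathbb Z_{q+2}$ after renaming each $z_k$ as $z_{(k-1)\bmod (q+2)}$), and let $$CW_q=x_0y_0z_{q+1}+x_0y_{q+1}z_0+x_{q+1}y_0z_0+\sum_{k=1}^q\left(x_0y_kz_{q+1-k}+x_ky_0z_{q+1-k}+x_ky_{q+1-k}z_0\right).$$ Then $CW_q$ is a monomial degeneration of $T'_{q+2}$.
   Context: Tensors are trilinear forms in variables $x_0,\dots,x_{q+1}$, $y_0,\dots,y_{q+1}$, $z_0,\dots,z_{q+1}$ with field coefficients; both tensors above have all listed coefficients equal to $1$. For tensors $A,B$ over the same variable sets, $A$ is a monomial degeneration of $B$ if every coefficient of $A$ is either the corresponding coefficient of $B$ or $0$, and there are functions $a,b,c$ from the $x$-, $y$-, $z$-variables respectively to $\mathbb Z$ such that for every term $x_iy_jz_k$ with nonzero coefficient in $B$ we have $a(x_i)+b(y_j)+c(z_k)\ge0$, with equality if and only if the coefficient of $x_iy_jz_k$ in $A$ is nonzero. *)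

theory Defs
  imports Main
begin

text \<open>A tensor in variables x_0..x_{n-1}, y_0..y_{n-1}, z_0..z_{n-1} is represented by its
coefficient function: T i j k is the coefficient of x_i y_j z_k (only i,j,k < n matter).\<close>

type_synonym 'a tensor = "nat \<Rightarrow> nat \<Rightarrow> nat \<Rightarrow> 'a"

definition monomial_degeneration :: "nat \<Rightarrow> 'a::zero tensor \<Rightarrow> 'a tensor \<Rightarrow> bool" where
  "monomial_degeneration n A B \<longleftrightarrow>
     (\<forall>i<n. \<forall>j<n. \<forall>k<n. A i j k = B i j k \<or> A i j k = 0) \<and>
     (\<exists>a b c :: nat \<Rightarrow> int. \<forall>i<n. \<forall>j<n. \<forall>k<n. B i j k \<noteq> 0 \<longrightarrow>
         a i + b j + c k \<ge> 0 \<and> (a i + b j + c k = 0 \<longleftrightarrow> A i j k \<noteq> 0))"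

definition Tprime :: "nat \<Rightarrow> 'a::{zero,one} tensor" where
  "Tprime q i j k = (if i \<le> q+1 \<and> j \<le> q+1 \<and> k \<le> q+1 \<and> (i+j+k) mod (q+2) = (q+1) mod (q+2)
                     then 1 else 0)"

definition CW_support :: "nat \<Rightarrow> (nat \<times> nat \<times> nat) set" where
  "CW_support q = {(0,0,q+1), (0,q+1,0), (q+1,0,0)} \<union>
     (\<Union>k\<in>{1..q}. {(0,k,q+1-k), (k,0,q+1-k), (k,q+1-k,0)})"

definition CW :: "nat \<Rightarrow> 'a::{zero,one} tensor" where
  "CW q i j k = (if (i,j,k) \<in> CW_support q then 1 else 0)"

end

theory Submission
  imports Defs
begin

text \<open>Use the same integer weights on the x-, y- and z-variables: -2 on index 0, 4 on index q+1
and 1 elsewhere. The support of T'_{q+2} consists of the triples with index sum q+1 or 2q+3.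
A triple of sum 2q+3 has no zero entry, so its weight is positive. A triple of sum q+1 is a
permutation of (0,0,q+1) or of (0,k,q+1-k) with 1 \<le> k \<le> q, both of weight 0, or has all
entries in 1..q and weight 3. So the weight vanishes exactly on the support of CW_q.\<close>

lemma mod_eq_pred_iff_triple_bound:
  fixes s n :: nat
  assumes "s \<le> 3 * (n - 1)"
  shows "s mod n = n - 1 \<longleftrightarrow> s = n - 1 \<or> s = 2 * n - 1"
proof (cases "n = 0")
  case False
  have "s div n < 3" using assms False by (simp add: div_less_iff_less_mult)
  then consider "s div n = 0" | "s div n = 1" | "s div n = 2" by linarith
  then show ?thesis
    using div_mult_mod_eq[of s n] mod_less_divisor[of n s] assms False by cases auto
qed (use assms in simp)

lemma Tprime_neq_zero_iff:
  "(Tprime q i j k :: 'a::zero_neq_one) \<noteq> 0 \<longleftrightarrow>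
     i \<le> q + 1 \<and> j \<le> q + 1 \<and> k \<le> q + 1 \<and> (i + j + k = q + 1 \<or> i + j + k = 2 * q + 3)"
proof -
  have "(i + j + k) mod (q + 2) = (q + 1) mod (q + 2) \<longleftrightarrow> i + j + k = q + 1 \<or> i + j + k = 2 * q + 3"
    if "i \<le> q + 1" "j \<le> q + 1" "k \<le> q + 1"
    using mod_eq_pred_iff_triple_bound[of "i + j + k" "q + 2"] that by (simp add: numeral_eq_Suc)
  then show ?thesis
    unfolding Tprime_def by auto
qed

lemma mem_CW_support_iff:
  "(i, j, k) \<in> CW_support q \<longleftrightarrow> i + j + k = q + 1 \<and> (i = 0 \<or> j = 0 \<or> k = 0)"
proof
  assume sum: "i + j + k = q + 1 \<and> (i = 0 \<or> j = 0 \<or> k = 0)"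
  then consider "i = 0" | "j = 0" | "k = 0" "i \<noteq> 0" "j \<noteq> 0"
    by blast
  then show "(i, j, k) \<in> CW_support q"
    by cases (use sum in \<open>auto simp: CW_support_def\<close>)
qed (auto simp: CW_support_def)

lemma CW_neq_zero_iff:
  "(CW q i j k :: 'a::zero_neq_one) \<noteq> 0 \<longleftrightarrow> i + j + k = q + 1 \<and> (i = 0 \<or> j = 0 \<or> k = 0)"
  by (simp add: CW_def mem_CW_support_iff)

lemma CW_eq_Tprime_or_zero:
  "(CW q i j k :: 'a::zero_neq_one) = Tprime q i j k \<or> CW q i j k = 0"
  unfolding CW_def Tprime_def mem_CW_support_iff by auto

definition CW_weight :: "nat \<Rightarrow> nat \<Rightarrow> int" where
  "CW_weight q i = (if i = 0 then -2 else if i = q + 1 then 4 else 1)"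

lemma CW_weight_sum_on_Tprime_support:
  assumes "(Tprime q i j k :: 'a::zero_neq_one) \<noteq> 0"
  shows "CW_weight q i + CW_weight q j + CW_weight q k \<ge> 0"
    and "CW_weight q i + CW_weight q j + CW_weight q k = 0 \<longleftrightarrow> (CW q i j k :: 'a) \<noteq> 0"
  using assms unfolding Tprime_neq_zero_iff CW_neq_zero_iff CW_weight_def by auto

theorem mainTheorem5:
  fixes q :: nat
  assumes "q \<ge> 1"
  shows "monomial_degeneration (q+2) (CW q :: 'a::field tensor) (Tprime q)"
  unfolding monomial_degeneration_def
  using CW_eq_Tprime_or_zero CW_weight_sum_on_Tprime_support
  by (intro conjI allI impI exI[of _ "CW_weight q"]) blast+

end
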